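(* Let $a\ge b\ge2$ be integers with $a/b\in\mathbb Z$, $\beta>1$ the positive root of $\beta^2=a\beta+b$, $\beta'=a-\beta$, and $\mathcal A=\{0,\dots,b-1\}$. For $n\ge1$ let $\mu_n=\min_{j\in\{0,1,\dots,b^n-1\}}P_{\mathrm{Pref}_{2n}(\mathbf h(j))}(\beta')$, and define sets $J_n\subseteq\mathbb Z$ by $J_0=\{0\}$ and \[ J_n=\Big\{j\in J_{n-1}+b^{n-1}\mathcal A:\ P_{\mathrm{Pref}_{2n}(\mathbf h(j))}(\beta')<\mu_n+|\beta'|^{2n+1}\tfrac{b-1}{1-(\beta')^2}\Big\}\quad(n\ge1). \] Then the sequence $(\mu_n)_{n\ge1}$ is non-increasing, and for every $n\ge1$, \[ \mu_n=\min_{j\in J_{n-1}+b^{n-1}\mathcal A}P_{\mathrm{Pref}_{2n}(\mathbf h(j))}(\beta'). \]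
   Context: For an algebraic integer $\beta$, the $\beta$-adic expansion of $x\in\mathbb Z[\beta]$ is the unique infinite word $\mathbf h(x)=u_0u_1u_2\cdots$ with $u_n\in\{0,1,\dots,|N(\beta)|-1\}$ such that $x-\sum_{i=0}^{n-1}u_i\beta^i\in\beta^n\mathbb Z[\beta]$ for all $n\in\mathbb N$; here $|N(\beta)|=b$. $\mathrm{Pref}_n(\mathbf u)$ is the prefix of length $n$ of $\mathbf u$; for a finite word $w=w_0\cdots w_{k-1}$, $P_w(X)=\sum_{i=0}^{k-1}w_iX^i$. $J+b^{n-1}\mathcal A=\{j+b^{n-1}d: j\in J, d\in\mathcal A\}$. *)

theory Defs
  imports Complex_Main
begin

definition Zbeta :: "real \<Rightarrow> real set" where
  "Zbeta beta = {real_of_int p + real_of_int q * beta | p q. True}"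

definition is_beta_expansion :: "nat \<Rightarrow> real \<Rightarrow> real \<Rightarrow> (nat \<Rightarrow> nat) \<Rightarrow> bool" where
  "is_beta_expansion b beta x u \<longleftrightarrow>
     (\<forall>n. u n < b) \<and>
     (\<forall>n. \<exists>y \<in> Zbeta beta. x - (\<Sum>i<n. real (u i) * beta ^ i) = beta ^ n * y)"

definition hexp :: "nat \<Rightarrow> real \<Rightarrow> real \<Rightarrow> (nat \<Rightarrow> nat)" where
  "hexp b beta x = (THE u. is_beta_expansion b beta x u)"

definition Ppref :: "(nat \<Rightarrow> nat) \<Rightarrow> nat \<Rightarrow> real \<Rightarrow> real" where
  "Ppref u k t = (\<Sum>i<k. real (u i) * t ^ i)"

definition Pj :: "nat \<Rightarrow> nat \<Rightarrow> real \<Rightarrow> nat \<Rightarrow> int \<Rightarrow> real" where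
  "Pj a b beta n j = Ppref (hexp b beta (real_of_int j)) (2 * n) (real a - beta)"

definition mu :: "nat \<Rightarrow> nat \<Rightarrow> real \<Rightarrow> nat \<Rightarrow> real" where
  "mu a b beta n = Min (Pj a b beta n ` {0 ..< int b ^ n})"

definition extJ :: "nat \<Rightarrow> int set \<Rightarrow> nat \<Rightarrow> int set" where
  "extJ b J m = {j + int b ^ m * int d | j d. j \<in> J \<and> d < b}"

fun Jset :: "nat \<Rightarrow> nat \<Rightarrow> real \<Rightarrow> nat \<Rightarrow> int set" where
  "Jset a b beta 0 = {0}"
| "Jset a b beta (Suc m) =
     {j \<in> extJ b (Jset a b beta m) m.
        Pj a b beta (Suc m) j < mu a b beta (Suc m)
          + \<bar>real a - beta\<bar> ^ (2 * Suc m + 1) * (real b - 1) / (1 - (real a - beta)^2)}"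

end

theory Submission
  imports Defs
begin

text \<open>Digits of \<open>\<beta>\<close>-adic expansions are governed by congruences modulo powers of \<open>\<beta>\<close>
  in \<open>\<int>[\<beta>]\<close>. Since \<open>b\<close> divides \<open>a\<close>, \<open>b = \<beta>\<^sup>2 e\<close> with \<open>e \<equiv> 1 (mod \<beta>)\<close>, so adding
  \<open>b\<^sup>n z\<close> to \<open>j\<close> leaves the first \<open>2n\<close> digits of \<open>h(j)\<close> unchanged and adds \<open>z\<close> to digit \<open>2n\<close>
  modulo \<open>b\<close>. Hence the quantity minimised in \<open>\<mu>\<^sub>n\<close> depends only on \<open>j mod b\<^sup>n\<close>, and a
  minimiser for \<open>n\<close> can be shifted to have digit \<open>2n\<close> equal to \<open>0\<close>; as \<open>-1 < \<beta>' < 0\<close>, the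
  one remaining new term is odd and nonpositive, so \<open>\<mu>\<^sub>n\<^sub>+\<^sub>1 \<le> \<mu>\<^sub>n\<close>. For the same sign
  reason \<open>P\<^sub>2\<^sub>m(\<beta>')\<close> exceeds \<open>P\<^sub>2\<^sub>n(\<beta>')\<close> (\<open>m \<le> n\<close>) by less than
  \<open>|\<beta>'|\<^sup>2\<^sup>m\<^sup>+\<^sup>1 (b-1)/(1-\<beta>'\<^sup>2)\<close>; together with monotonicity of \<open>\<mu>\<close> this puts the residue
  modulo \<open>b\<^sup>m\<close> of a minimiser for \<open>n\<close> into \<open>J\<^sub>m\<close> for every \<open>m < n\<close>.\<close>

lemma Ppref_Suc: "Ppref u (Suc k) t = Ppref u k t + real (u k) * t ^ k"
  unfolding Ppref_def by simp

lemma digit_pair_lower_bound: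
  fixes t :: real
  assumes "t \<le> 0" and "u (Suc (2*l)) < b"
  shows "- (real b - 1) * \<bar>t\<bar> ^ Suc (2*l)
           \<le> real (u (2*l)) * t ^ (2*l) + real (u (Suc (2*l))) * t ^ Suc (2*l)"
proof -
  have "t ^ Suc (2*l) = - (\<bar>t\<bar> ^ Suc (2*l))"
    using assms(1) power_minus_odd[of "Suc (2*l)" "\<bar>t\<bar>"] by (simp add: abs_of_nonpos)
  moreover have "real (u (Suc (2*l))) * \<bar>t\<bar> ^ Suc (2*l) \<le> (real b - 1) * \<bar>t\<bar> ^ Suc (2*l)"
    using assms(2) by (intro mult_right_mono) auto
  ultimately have "- (real b - 1) * \<bar>t\<bar> ^ Suc (2*l) \<le> real (u (Suc (2*l))) * t ^ Suc (2*l)"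
    by (simp only: mult_minus_left mult_minus_right)
  moreover have "0 \<le> real (u (2*l)) * t ^ (2*l)" by simp
  ultimately show ?thesis by linarith
qed

lemma Ppref_even_tail_bound:
  fixes t :: real
  assumes "t \<le> 0" and "\<forall>i. u i < b"
  shows "Ppref u (2*m) t - Ppref u (2*(m+k)) t \<le> (real b - 1) * \<bar>t\<bar> ^ Suc (2*m) * (\<Sum>i<k. (t^2)^i)"
proof (induction k)
  case 0 then show ?case by simp
next
  case (Suc k)
  let ?l = "m + k" and ?B = "(real b - 1) * \<bar>t\<bar> ^ Suc (2*m)"
  let ?T = "real (u (2*?l)) * t ^ (2*?l) + real (u (Suc (2*?l))) * t ^ Suc (2*?l)"
  have "2 * (m + Suc k) = Suc (Suc (2 * ?l))" by simp
  then have "Ppref u (2*(m + Suc k)) t = Ppref u (2*?l) t + ?T"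
    by (simp add: Ppref_Suc)
  moreover have "- (?B * (t^2)^k) \<le> ?T"
  proof -
    have "\<bar>t\<bar> ^ Suc (2*?l) = \<bar>t\<bar> ^ Suc (2*m) * (t^2)^k"
      by (simp add: power_add power_mult)
    then have "- (real b - 1) * \<bar>t\<bar> ^ Suc (2*?l) = - (?B * (t^2)^k)"
      by (simp only: mult_minus_left mult.assoc)
    moreover have "- (real b - 1) * \<bar>t\<bar> ^ Suc (2*?l) \<le> ?T"
      using digit_pair_lower_bound[OF assms(1), of u ?l b] assms(2) by blast
    ultimately show ?thesis by linarith
  qed
  moreover have "?B * (\<Sum>i<Suc k. (t^2)^i) = ?B * (\<Sum>i<k. (t^2)^i) + ?B * (t^2)^k"
    by (simp add: distrib_left)
  ultimately show ?case using Suc.IH by linarith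
qed

lemma Ppref_even_tail_less:
  fixes t :: real
  assumes "-1 < t" "t < 0" and "\<forall>i. u i < b" and "2 \<le> b" and "m \<le> n"
  shows "Ppref u (2*m) t - Ppref u (2*n) t < \<bar>t\<bar> ^ (2*m + 1) * (real b - 1) / (1 - t^2)"
proof -
  have s: "0 < t^2" "t^2 < 1"
    using assms(1,2) by (simp_all add: abs_square_less_1)
  have "0 < \<bar>t\<bar> ^ Suc (2*m)"
    using assms(2) by (intro zero_less_power) simp
  then have pos: "0 < (real b - 1) * \<bar>t\<bar> ^ Suc (2*m)"
    using assms(4) by simp
  have "Ppref u (2*m) t - Ppref u (2*n) t \<le> (real b - 1) * \<bar>t\<bar> ^ Suc (2*m) * (\<Sum>i<n-m. (t^2)^i)"
    using Ppref_even_tail_bound[OF _ assms(3), of t m "n - m"] assms(2,5) by simp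
  also have "\<dots> < (real b - 1) * \<bar>t\<bar> ^ Suc (2*m) * (1 / (1 - t^2))"
    using geometric_sum_less[OF s, of "{..<n-m}"] pos by (intro mult_strict_left_mono) auto
  finally show ?thesis by (simp add: ac_simps)
qed

lemma finite_extJ: "finite J \<Longrightarrow> finite (extJ b J m)"
proof -
  assume "finite J"
  moreover have "extJ b J m = (\<lambda>(j, d). j + int b ^ m * int d) ` (J \<times> {..<b})"
    unfolding extJ_def by auto
  ultimately show ?thesis by simp
qed

lemma finite_Jset: "finite (Jset a b beta m)"
  by (induction m) (simp_all add: finite_extJ)

lemma mem_extJ_of_mod:
  assumes "0 < b" "0 \<le> j" "j < int b ^ Suc m" "j mod int b ^ m \<in> J"
  shows "j \<in> extJ b J m"
proof -
  have q: "0 < int b ^ m"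
    using assms(1) by simp
  have "0 \<le> j div int b ^ m"
    using q assms(2) by (simp add: pos_imp_zdiv_nonneg_iff)
  moreover have "j div int b ^ m < int b"
    using q assms(3) by (smt (verit) minus_mod_eq_div_mult mult_right_less_imp_less pos_mod_sign power_Suc)
  moreover have "j = j mod int b ^ m + int b ^ m * (j div int b ^ m)"
    by simp
  ultimately show ?thesis
    unfolding extJ_def using assms(4)
    by (intro CollectI exI[of _ "j mod int b ^ m"] exI[of _ "nat (j div int b ^ m)"]) simp
qed

locale quadratic_integer =
  fixes a b :: nat and beta :: real
  assumes beta_sq: "beta ^ 2 = real a * beta + real b"
begin

lemma beta_mult_self: "beta * beta = real a * beta + real b"
  using beta_sq by (simp add: power2_eq_square)

lemma Zbeta_iff: "x \<in> Zbeta beta \<longleftrightarrow> (\<exists>p q. x = of_int p + of_int q * beta)"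
  unfolding Zbeta_def by auto

lemma of_int_in_Zbeta [simp, intro]: "of_int k \<in> Zbeta beta"
  unfolding Zbeta_iff by (rule exI[of _ k], rule exI[of _ 0]) simp

lemma zero_in_Zbeta [simp, intro]: "0 \<in> Zbeta beta"
  using of_int_in_Zbeta[of 0] by simp

lemma one_in_Zbeta [simp, intro]: "1 \<in> Zbeta beta"
  using of_int_in_Zbeta[of 1] by simp

lemma of_nat_in_Zbeta [simp, intro]: "real n \<in> Zbeta beta"
  using of_int_in_Zbeta[of "int n"] by simp

lemma beta_in_Zbeta [simp, intro]: "beta \<in> Zbeta beta"
  unfolding Zbeta_iff by (rule exI[of _ 0], rule exI[of _ 1]) simp

lemma Zbeta_add [intro]: "x \<in> Zbeta beta \<Longrightarrow> y \<in> Zbeta beta \<Longrightarrow> x + y \<in> Zbeta beta"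
  unfolding Zbeta_iff
  by (elim exE, rename_tac p q r s, rule_tac x="p + r" in exI, rule_tac x="q + s" in exI)
    (simp add: algebra_simps)

lemma Zbeta_diff [intro]: "x \<in> Zbeta beta \<Longrightarrow> y \<in> Zbeta beta \<Longrightarrow> x - y \<in> Zbeta beta"
  unfolding Zbeta_iff
  by (elim exE, rename_tac p q r s, rule_tac x="p - r" in exI, rule_tac x="q - s" in exI)
    (simp add: algebra_simps)

lemma Zbeta_uminus [intro]: "x \<in> Zbeta beta \<Longrightarrow> - x \<in> Zbeta beta"
  using Zbeta_diff[of 0 x] by simp

lemma Zbeta_mult [intro]:
  assumes "x \<in> Zbeta beta" "y \<in> Zbeta beta"
  shows "x * y \<in> Zbeta beta"
proof -
  obtain p q r s where xy: "x = of_int p + of_int q * beta" "y = of_int r + of_int s * beta"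
    using assms unfolding Zbeta_iff by blast
  have "x * y = of_int p * of_int r + (of_int p * of_int s + of_int q * of_int r) * beta
                + of_int q * of_int s * (beta * beta)"
    unfolding xy by (simp add: algebra_simps)
  also have "\<dots> = of_int (p*r + q*s*int b) + of_int (p*s + q*r + q*s*int a) * beta"
    unfolding beta_mult_self by (simp add: algebra_simps)
  finally show ?thesis unfolding Zbeta_iff by blast
qed

lemma Zbeta_power [intro]: "x \<in> Zbeta beta \<Longrightarrow> x ^ n \<in> Zbeta beta"
  by (induction n) auto

definition beta_cong :: "nat \<Rightarrow> real \<Rightarrow> real \<Rightarrow> bool" where
  "beta_cong k x y \<longleftrightarrow> (\<exists>z \<in> Zbeta beta. x - y = beta ^ k * z)"

lemma beta_cong_refl [simp]: "beta_cong k x x"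
  unfolding beta_cong_def by force

lemma beta_cong_sym: "beta_cong k x y \<Longrightarrow> beta_cong k y x"
proof -
  assume "beta_cong k x y"
  then obtain z where "z \<in> Zbeta beta" "x - y = beta ^ k * z"
    unfolding beta_cong_def by blast
  then show ?thesis
    unfolding beta_cong_def by (intro bexI[of _ "- z"]) auto
qed

lemma beta_cong_trans [trans]: "beta_cong k x y \<Longrightarrow> beta_cong k y z \<Longrightarrow> beta_cong k x z"
proof -
  assume "beta_cong k x y" "beta_cong k y z"
  then obtain v w where "v \<in> Zbeta beta" "x - y = beta ^ k * v" "w \<in> Zbeta beta" "y - z = beta ^ k * w"
    unfolding beta_cong_def by blast
  then show ?thesis
    unfolding beta_cong_def by (intro bexI[of _ "v + w"]) (auto simp: algebra_simps)
qed

lemma beta_cong_add: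
  assumes "beta_cong k x y" "beta_cong k x' y'"
  shows "beta_cong k (x + x') (y + y')"
proof -
  obtain z z' where "z \<in> Zbeta beta" "x - y = beta ^ k * z" "z' \<in> Zbeta beta" "x' - y' = beta ^ k * z'"
    using assms unfolding beta_cong_def by blast
  then show ?thesis
    unfolding beta_cong_def by (intro bexI[of _ "z + z'"]) (auto simp: algebra_simps)
qed

lemma beta_cong_add_left_cancel [simp]: "beta_cong k (c + x) (c + y) \<longleftrightarrow> beta_cong k x y"
  unfolding beta_cong_def by simp

lemma beta_cong_mult:
  assumes "beta_cong k x y" "beta_cong k x' y'" "x \<in> Zbeta beta" "y' \<in> Zbeta beta"
  shows "beta_cong k (x * x') (y * y')"
proof -
  obtain z z' where "z \<in> Zbeta beta" "x - y = beta ^ k * z" "z' \<in> Zbeta beta" "x' - y' = beta ^ k * z'"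
    using assms(1,2) unfolding beta_cong_def by blast
  moreover have "x * x' - y * y' = x * (x' - y') + y' * (x - y)"
    by (simp add: algebra_simps)
  moreover have "x * z' + y' * z \<in> Zbeta beta"
    using assms(3,4) \<open>z \<in> Zbeta beta\<close> \<open>z' \<in> Zbeta beta\<close> by blast
  ultimately show ?thesis
    unfolding beta_cong_def by (intro bexI[of _ "x * z' + y' * z"]) (auto simp: algebra_simps)
qed

lemma beta_cong_power:
  assumes "beta_cong k x y" "x \<in> Zbeta beta" "y \<in> Zbeta beta"
  shows "beta_cong k (x ^ n) (y ^ n)"
  by (induction n) (use assms in \<open>auto intro: beta_cong_mult\<close>)

lemma beta_cong_mono:
  assumes "beta_cong k x y" "l \<le> k"
  shows "beta_cong l x y"
proof -
  obtain z where "z \<in> Zbeta beta" "x - y = beta ^ k * z"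
    using assms(1) unfolding beta_cong_def by blast
  moreover have "beta ^ k = beta ^ l * beta ^ (k - l)"
    using assms(2) by (simp flip: power_add)
  ultimately show ?thesis
    unfolding beta_cong_def by (intro bexI[of _ "beta ^ (k - l) * z"]) auto
qed

lemma beta_cong_scale_iff:
  assumes "beta \<noteq> 0"
  shows "beta_cong (k + l) (beta ^ k * x) (beta ^ k * y) \<longleftrightarrow> beta_cong l x y"
proof -
  have "beta ^ k * x - beta ^ k * y = beta ^ (k + l) * z \<longleftrightarrow> x - y = beta ^ l * z" for z
  proof -
    have "beta ^ k * x - beta ^ k * y = beta ^ (k + l) * z
          \<longleftrightarrow> beta ^ k * (x - y) = beta ^ k * (beta ^ l * z)"
      by (simp add: power_add algebra_simps)
    then show ?thesis using assms by simp
  qed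
  then show ?thesis unfolding beta_cong_def by simp
qed

lemma beta_power_mult_beta_cong_zero: "z \<in> Zbeta beta \<Longrightarrow> beta_cong k (beta ^ k * z) 0"
  unfolding beta_cong_def by auto

lemma is_beta_expansion_iff:
  "is_beta_expansion b beta x u \<longleftrightarrow> (\<forall>n. u n < b) \<and> (\<forall>n. beta_cong n x (Ppref u n beta))"
  unfolding is_beta_expansion_def beta_cong_def Ppref_def by simp

end

locale beta_numeration = quadratic_integer +
  assumes b_ge_2: "2 \<le> b" and b_le_a: "b \<le> a" and beta_gt_1: "1 < beta"
begin

lemma beta_times_conj: "beta * (beta - real a) = real b"
  using beta_mult_self by (simp add: algebra_simps)

lemma conj_neg: "real a - beta < 0"
proof -
  have "0 < beta * (beta - real a)"
    using beta_times_conj b_ge_2 by simp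
  then show ?thesis
    using beta_gt_1 by (simp add: zero_less_mult_iff)
qed

lemma conj_gt_minus_one: "-1 < real a - beta"
proof (rule ccontr)
  assume "\<not> -1 < real a - beta"
  then have "beta * 1 \<le> beta * (beta - real a)"
    using beta_gt_1 by (intro mult_left_mono) auto
  moreover have "real a + 1 \<le> beta"
    using \<open>\<not> -1 < real a - beta\<close> by simp
  ultimately show False
    using beta_times_conj b_le_a by simp
qed

text \<open>A rational root of the monic integer polynomial is an integer, whereas the conjugate
  lies strictly between \<open>-1\<close> and \<open>0\<close>.\<close>
lemma beta_not_Rats: "beta \<notin> \<rat>"
proof
  assume "beta \<in> \<rat>"
  then obtain p q :: int where q: "0 < q" "coprime p q" and beta_eq: "beta = of_int p / of_int q"
    by (rule Rats_cases')
  have "of_int (p^2) = (of_int (int a * p * q + int b * q^2) :: real)"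
    using beta_sq q(1) unfolding beta_eq by (simp add: field_simps power2_eq_square)
  then have "p^2 = int a * p * q + int b * q^2"
    by (simp only: of_int_eq_iff)
  then have "q dvd p^2"
    by (simp add: power2_eq_square)
  moreover have "coprime q (p^2)"
    using q(2) by (simp add: coprime_commute)
  ultimately have "is_unit q"
    by (metis coprime_common_divisor dvd_refl)
  then have "q = 1"
    using q(1) by simp
  then have "real a - beta = of_int (int a - p)"
    using beta_eq by simp
  then have "int a - p < 0" "-1 < int a - p"
    using conj_neg conj_gt_minus_one by linarith+
  then show False by linarith
qed

lemma Zbeta_coeffs_unique:
  assumes "of_int p + of_int q * beta = of_int r + of_int s * beta"
  shows "p = r \<and> q = s"
proof (cases "q = s")
  case True
  then show ?thesis using assms by simp
next
  case False
  then have "beta = of_int (p - r) / of_int (s - q)"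
    using assms by (simp add: field_simps)
  then show ?thesis
    using beta_not_Rats by simp
qed

lemma int_beta_cong_iff: "beta_cong 1 (of_int k) (of_int l) \<longleftrightarrow> int b dvd k - l"
proof
  assume "beta_cong 1 (of_int k) (of_int l)"
  then obtain z where "z \<in> Zbeta beta" "of_int (k - l) = beta * z"
    unfolding beta_cong_def by auto
  moreover obtain r s where "z = of_int r + of_int s * beta"
    using \<open>z \<in> Zbeta beta\<close> unfolding Zbeta_iff by blast
  ultimately have "of_int (k - l) = beta * (of_int r + of_int s * beta)"
    by simp
  also have "\<dots> = of_int r * beta + of_int s * (beta * beta)"
    by (simp add: algebra_simps)
  also have "\<dots> = of_int (s * int b) + of_int (r + s * int a) * beta"
    unfolding beta_mult_self by (simp add: algebra_simps)
  finally have "of_int (k - l) + of_int 0 * beta = of_int (s * int b) + of_int (r + s * int a) * beta"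
    by simp
  then have "k - l = s * int b"
    using Zbeta_coeffs_unique by blast
  then show "int b dvd k - l" by simp
next
  assume "int b dvd k - l"
  then obtain m where "k - l = int b * m" by blast
  then have "of_int k - of_int l = beta * ((beta - real a) * of_int m)"
    using beta_times_conj by (simp flip: of_int_diff)
  then show "beta_cong 1 (of_int k) (of_int l)"
    unfolding beta_cong_def by (intro bexI[of _ "(beta - real a) * of_int m"]) auto
qed

lemma digit_beta_cong_imp_eq:
  assumes "u < b" "v < b" "beta_cong 1 (real u) (real v)"
  shows "u = v"
proof -
  have "int b dvd int u - int v"
    using assms(3) int_beta_cong_iff[of "int u" "int v"] by simp
  moreover have "\<bar>int u - int v\<bar> < int b"
    using assms(1,2) by linarith
  ultimately show ?thesis
    by (metis dvd_imp_le_int abs_of_nat eq_iff_diff_eq_0 not_less of_nat_eq_iff)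
qed

lemma expansion_prefix_unique:
  assumes u: "\<forall>i. u i < b" and v: "\<forall>i. v i < b"
    and "\<forall>k\<le>K. beta_cong k x (Ppref u k beta)" and "\<forall>k\<le>K. beta_cong k x (Ppref v k beta)"
  shows "i < K \<Longrightarrow> u i = v i"
proof (induction i rule: less_induct)
  case (less i)
  have "Ppref u i beta = Ppref v i beta"
    unfolding Ppref_def using less by (intro sum.cong) auto
  moreover have "beta_cong (Suc i) (Ppref u (Suc i) beta) (Ppref v (Suc i) beta)"
    using assms(3,4) less.prems by (meson Suc_leI beta_cong_sym beta_cong_trans)
  ultimately have "beta_cong (i + 1) (beta ^ i * real (u i)) (beta ^ i * real (v i))"
    by (simp add: Ppref_Suc mult.commute)
  then have "beta_cong 1 (real (u i)) (real (v i))"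
    using beta_cong_scale_iff[of i 1] beta_gt_1 by simp
  then show ?case
    using digit_beta_cong_imp_eq u v by blast
qed

lemma Zbeta_digit_split: "x \<in> Zbeta beta \<Longrightarrow> \<exists>d<b. \<exists>y \<in> Zbeta beta. x = real d + beta * y"
proof -
  assume "x \<in> Zbeta beta"
  then obtain p q where x: "x = of_int p + of_int q * beta"
    unfolding Zbeta_iff by blast
  have b_pos: "0 < int b"
    using b_ge_2 by simp
  define d where "d = nat (p mod int b)"
  have "d < b"
    unfolding d_def using b_pos by (simp add: nat_less_iff)
  have "real d = of_int (p mod int b)"
    unfolding d_def using b_pos by simp
  moreover have "p = p mod int b + int b * (p div int b)"
    by simp
  ultimately have "of_int p = real d + real b * of_int (p div int b)"
    by (metis of_int_add of_int_mult of_int_of_nat_eq)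
  then have "x = real d + beta * ((beta - real a) * of_int (p div int b) + of_int q)"
    unfolding x by (simp flip: beta_times_conj) (simp add: algebra_simps)
  then show ?thesis
    using \<open>d < b\<close> by blast
qed

lemma beta_expansion_exists:
  assumes "x \<in> Zbeta beta"
  shows "\<exists>u. is_beta_expansion b beta x u"
proof -
  have "\<exists>dz. fst dz < b \<and> snd dz \<in> Zbeta beta \<and> real (fst dz) + beta * snd dz = y"
    if y: "y \<in> Zbeta beta" for y
  proof -
    obtain d z where "d < b" "z \<in> Zbeta beta" "y = real d + beta * z"
      using Zbeta_digit_split[OF y] by blast
    then show ?thesis by (intro exI[of _ "(d, z)"]) simp
  qed
  then obtain f where f: "\<And>y. y \<in> Zbeta beta \<Longrightarrow>
      fst (f y) < b \<and> snd (f y) \<in> Zbeta beta \<and> real (fst (f y)) + beta * snd (f y) = y"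
    by metis
  define r where "r n = ((snd \<circ> f) ^^ n) x" for n
  define u where "u n = fst (f (r n))" for n
  have r_in: "r n \<in> Zbeta beta" for n
    unfolding r_def by (induction n) (simp_all add: assms f)
  have u_less: "u n < b" for n
    unfolding u_def using f r_in by blast
  have rem: "x - Ppref u n beta = beta ^ n * r n" for n
  proof (induction n)
    case 0 then show ?case by (simp add: Ppref_def r_def)
  next
    case (Suc n)
    have "r n - real (u n) = beta * r (Suc n)"
      using f[OF r_in[of n]] unfolding u_def r_def by simp
    moreover have "x - Ppref u (Suc n) beta = beta ^ n * (r n - real (u n))"
      using Suc by (simp add: Ppref_Suc algebra_simps)
    ultimately show ?case
      by simp
  qed
  have "is_beta_expansion b beta x u"
    unfolding is_beta_expansion_iff beta_cong_def using u_less rem r_in by blast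
  then show ?thesis by blast
qed

lemma beta_expansion_unique:
  assumes "is_beta_expansion b beta x u" "is_beta_expansion b beta x v"
  shows "u = v"
proof
  fix i
  have "\<forall>j. u j < b" "\<forall>j. v j < b" "\<forall>k. beta_cong k x (Ppref u k beta)" "\<forall>k. beta_cong k x (Ppref v k beta)"
    using assms unfolding is_beta_expansion_iff by blast+
  then show "u i = v i"
    using expansion_prefix_unique[of u v "Suc i" x i] by blast
qed

lemma hexp_is_beta_expansion:
  assumes "x \<in> Zbeta beta"
  shows "is_beta_expansion b beta x (hexp b beta x)"
proof -
  have "\<exists>!u. is_beta_expansion b beta x u"
    using beta_expansion_exists[OF assms] beta_expansion_unique by blast
  then show ?thesis
    unfolding hexp_def by (rule theI')
qed

lemma hexp_digit_less: "x \<in> Zbeta beta \<Longrightarrow> hexp b beta x i < b"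
  using hexp_is_beta_expansion is_beta_expansion_iff by blast

lemma hexp_beta_cong: "x \<in> Zbeta beta \<Longrightarrow> beta_cong k x (Ppref (hexp b beta x) k beta)"
  using hexp_is_beta_expansion is_beta_expansion_iff by blast

end

locale beta_numeration_dvd = beta_numeration +
  assumes b_dvd_a: "b dvd a"
begin

text \<open>With \<open>a = c b\<close> one gets \<open>b = \<beta>\<^sup>2 e\<close> for the element \<open>e = 1 + c (a - \<beta>)\<close> of
  \<open>\<int>[\<beta>]\<close>, and \<open>e \<equiv> 1 (mod \<beta>)\<close> because \<open>a - \<beta> = \<beta> (c (\<beta> - a) - 1)\<close>.\<close>
lemma b_eq_beta_sq_times_unit: "\<exists>e \<in> Zbeta beta. real b = beta ^ 2 * e \<and> beta_cong 1 e 1"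
proof -
  obtain c where c: "a = b * c"
    using b_dvd_a by blast
  define e where "e = 1 + real c * (real a - beta)"
  have a_eq: "real a = real c * (beta * (beta - real a))"
    using c beta_times_conj by simp
  have "e \<in> Zbeta beta"
    unfolding e_def by (intro Zbeta_add Zbeta_mult Zbeta_diff) auto
  moreover have "real b = beta ^ 2 * e"
    unfolding e_def power2_eq_square using beta_mult_self a_eq by algebra
  moreover have "e - 1 = beta * (real c * (real c * (beta - real a) - 1))"
    unfolding e_def using a_eq by algebra
  then have "beta_cong 1 e 1"
    unfolding beta_cong_def
    by (intro bexI[of _ "real c * (real c * (beta - real a) - 1)"]) (auto intro!: Zbeta_mult Zbeta_diff)
  ultimately show ?thesis by blast
qed

lemma b_power_beta_cong: "beta_cong (2*n + 1) (real b ^ n) (beta ^ (2*n))"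
proof -
  obtain e where e: "e \<in> Zbeta beta" "real b = beta ^ 2 * e" "beta_cong 1 e 1"
    using b_eq_beta_sq_times_unit by blast
  have "beta_cong 1 (e ^ n) 1"
    using beta_cong_power[OF e(3) e(1), of n] by simp
  then have "beta_cong (2*n + 1) (beta ^ (2*n) * e ^ n) (beta ^ (2*n) * 1)"
    using beta_cong_scale_iff[of "2*n" 1 "e ^ n" 1] beta_gt_1 by simp
  then show ?thesis
    using e(2) by (simp add: power_mult_distrib power_mult)
qed

lemma b_power_beta_cong_zero: "beta_cong (2*n) (real b ^ n * of_int z) 0"
proof -
  have "beta_cong (2*n) (real b ^ n) (beta ^ (2*n) * 1)"
    using beta_cong_mono[OF b_power_beta_cong] by simp
  moreover have "beta_cong (2*n) (beta ^ (2*n) * 1) 0"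
    by (rule beta_power_mult_beta_cong_zero) auto
  ultimately have "beta_cong (2*n) (real b ^ n) 0"
    by (rule beta_cong_trans)
  then show ?thesis
    using beta_cong_mult[of "2*n" "real b ^ n" 0 "of_int z" "of_int z"] by auto
qed

lemma hexp_add_b_power_prefix:
  assumes "i < 2*n"
  shows "hexp b beta (of_int (j + int b ^ n * z)) i = hexp b beta (of_int j) i"
proof -
  let ?x = "of_int (j + int b ^ n * z) :: real" and ?u = "hexp b beta (of_int j)"
  have "beta_cong (2*n) (of_int j + real b ^ n * of_int z) (of_int j + 0)"
    by (rule beta_cong_add[OF beta_cong_refl b_power_beta_cong_zero])
  then have x_j: "beta_cong (2*n) ?x (of_int j)"
    by simp
  have "beta_cong k ?x (Ppref ?u k beta)" if "k \<le> 2*n" for k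
    using beta_cong_mono[OF x_j that] hexp_beta_cong[OF of_int_in_Zbeta] by (rule beta_cong_trans)
  then show ?thesis
    using expansion_prefix_unique[of "hexp b beta ?x" ?u "2*n" ?x]
      hexp_digit_less[OF of_int_in_Zbeta] hexp_beta_cong[OF of_int_in_Zbeta] assms by blast
qed

lemma hexp_add_b_power_digit:
  "int (hexp b beta (of_int (j + int b ^ n * z)) (2*n))
     = (int (hexp b beta (of_int j) (2*n)) + z) mod int b"
proof -
  let ?x = "of_int (j + int b ^ n * z) :: real"
  let ?u = "hexp b beta (of_int j)" and ?v = "hexp b beta ?x"
  let ?P = "Ppref ?u (2*n) beta" and ?k = "2*n + 1" and ?B = "beta ^ (2*n)"
  have "Ppref ?v (2*n) beta = ?P"
    unfolding Ppref_def using hexp_add_b_power_prefix by (intro sum.cong) auto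
  then have v: "beta_cong ?k ?x (?P + ?B * real (?v (2*n)))"
    using hexp_beta_cong[OF of_int_in_Zbeta, of ?k "j + int b ^ n * z"]
    by (simp add: Ppref_Suc mult.commute)
  have u: "beta_cong ?k (of_int j) (?P + ?B * real (?u (2*n)))"
    using hexp_beta_cong[OF of_int_in_Zbeta, of ?k j] by (simp add: Ppref_Suc mult.commute)
  have "beta_cong ?k (real b ^ n * of_int z) (?B * of_int z)"
    by (rule beta_cong_mult[OF b_power_beta_cong beta_cong_refl]) auto
  then have "beta_cong ?k ?x (of_int j + ?B * of_int z)"
    using beta_cong_add[OF beta_cong_refl] by simp
  also have "beta_cong ?k (of_int j + ?B * of_int z) (?P + ?B * real (?u (2*n)) + ?B * of_int z)"
    by (rule beta_cong_add[OF u beta_cong_refl])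
  finally have "beta_cong ?k (?P + ?B * real (?v (2*n))) (?P + ?B * (real (?u (2*n)) + of_int z))"
    using v by (auto simp: algebra_simps intro: beta_cong_trans beta_cong_sym)
  then have "beta_cong 1 (of_int (int (?v (2*n)))) (of_int (int (?u (2*n)) + z))"
    using beta_cong_scale_iff[of "2*n" 1] beta_gt_1 by simp
  then have "int (?v (2*n)) mod int b = (int (?u (2*n)) + z) mod int b"
    using int_beta_cong_iff mod_eq_dvd_iff by blast
  then show ?thesis
    using hexp_digit_less[OF of_int_in_Zbeta, of "j + int b ^ n * z" "2*n"] by simp
qed

lemma Pj_add_b_power: "Pj a b beta n (j + int b ^ n * z) = Pj a b beta n j"
  unfolding Pj_def Ppref_def using hexp_add_b_power_prefix by (intro sum.cong) auto

lemma Pj_mod: "Pj a b beta n (j mod int b ^ n) = Pj a b beta n j"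
  using Pj_add_b_power[of n "j mod int b ^ n" "j div int b ^ n"] by simp

lemma mu_le_Pj: "mu a b beta n \<le> Pj a b beta n j"
proof -
  have "j mod int b ^ n \<in> {0..<int b ^ n}"
    using b_ge_2 by simp
  then show ?thesis
    unfolding mu_def using Pj_mod by (metis Min_le finite_atLeastLessThan_int finite_imageI image_eqI)
qed

lemma mu_attained: "\<exists>j \<in> {0..<int b ^ n}. Pj a b beta n j = mu a b beta n"
proof -
  have "mu a b beta n \<in> Pj a b beta n ` {0..<int b ^ n}"
    unfolding mu_def using b_ge_2 by (intro Min_in) auto
  then show ?thesis by auto
qed

lemma mu_Suc_le: "mu a b beta (Suc n) \<le> mu a b beta n"
proof -
  let ?t = "real a - beta"
  obtain j where j: "Pj a b beta n j = mu a b beta n"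
    using mu_attained by blast
  define d where "d = (- int (hexp b beta (of_int j) (2*n))) mod int b"
  define j' where "j' = j + int b ^ n * d"
  let ?v = "hexp b beta (of_int j')"
  have "?v (2*n) = 0"
    using hexp_add_b_power_digit[of j n d] unfolding j'_def d_def by (simp add: mod_add_right_eq)
  moreover have "2 * Suc n = Suc (Suc (2*n))" by simp
  ultimately have "Pj a b beta (Suc n) j' = Pj a b beta n j' + real (?v (Suc (2*n))) * ?t ^ Suc (2*n)"
    unfolding Pj_def by (simp add: Ppref_Suc)
  also have "Pj a b beta n j' = mu a b beta n"
    unfolding j'_def Pj_add_b_power j ..
  also have "real (?v (Suc (2*n))) * ?t ^ Suc (2*n) \<le> 0"
  proof -
    have "?t ^ Suc (2*n) < 0"
      using conj_neg by (subst power_less_zero_eq) simp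
    then show ?thesis by (simp add: mult_nonneg_nonpos)
  qed
  finally show ?thesis
    using mu_le_Pj[of "Suc n" j'] by simp
qed

lemma mu_antimono: "m \<le> n \<Longrightarrow> mu a b beta n \<le> mu a b beta m"
  by (induction n rule: dec_induct) (auto intro: order_trans[OF mu_Suc_le])

lemma Pj_diff_less:
  "m \<le> n \<Longrightarrow> Pj a b beta m j - Pj a b beta n j
     < \<bar>real a - beta\<bar> ^ (2*m + 1) * (real b - 1) / (1 - (real a - beta)^2)"
  unfolding Pj_def
  using Ppref_even_tail_less conj_gt_minus_one conj_neg hexp_digit_less[OF of_int_in_Zbeta] b_ge_2
  by blast

lemma minimizer_mod_in_Jset:
  assumes j: "j \<in> {0..<int b ^ n}" "Pj a b beta n j = mu a b beta n"
  shows "m < n \<Longrightarrow> j mod int b ^ m \<in> Jset a b beta m"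
proof (induction m)
  case 0
  then show ?case by simp
next
  case (Suc m)
  have "j mod int b ^ Suc m \<in> extJ b (Jset a b beta m) m"
    using Suc b_ge_2 by (intro mem_extJ_of_mod) (simp_all add: mod_mod_cancel le_imp_power_dvd)
  moreover have "Pj a b beta (Suc m) (j mod int b ^ Suc m)
      < mu a b beta (Suc m) + \<bar>real a - beta\<bar> ^ (2 * Suc m + 1) * (real b - 1) / (1 - (real a - beta)^2)"
    using Pj_diff_less[of "Suc m" n j] mu_antimono[of "Suc m" n] Suc.prems j(2)
    unfolding Pj_mod by simp
  ultimately show ?case by simp
qed

lemma mu_eq_Min_extJ:
  assumes "1 \<le> n"
  shows "mu a b beta n = Min (Pj a b beta n ` extJ b (Jset a b beta (n - 1)) (n - 1))"
proof (rule Min_eqI[symmetric])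
  show "finite (Pj a b beta n ` extJ b (Jset a b beta (n - 1)) (n - 1))"
    using finite_extJ finite_Jset by blast
  show "y \<in> Pj a b beta n ` extJ b (Jset a b beta (n - 1)) (n - 1) \<Longrightarrow> mu a b beta n \<le> y" for y
    using mu_le_Pj by auto
  obtain j where j: "j \<in> {0..<int b ^ n}" "Pj a b beta n j = mu a b beta n"
    using mu_attained by blast
  have "j \<in> extJ b (Jset a b beta (n - 1)) (n - 1)"
    using j assms b_ge_2 minimizer_mod_in_Jset[OF j, of "n - 1"] by (intro mem_extJ_of_mod) auto
  then show "mu a b beta n \<in> Pj a b beta n ` extJ b (Jset a b beta (n - 1)) (n - 1)"
    using j(2) by force
qed

end

theorem mainTheorem11:
  fixes a b :: nat and beta :: real
  assumes "b \<ge> 2" and "a \<ge> b" and "b dvd a"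
    and "beta > 1" and "beta ^ 2 = real a * beta + real b"
  shows "(\<forall>n\<ge>1. mu a b beta (Suc n) \<le> mu a b beta n) \<and>
         (\<forall>n\<ge>1. mu a b beta n = Min (Pj a b beta n ` extJ b (Jset a b beta (n - 1)) (n - 1)))"
proof -
  interpret beta_numeration_dvd a b beta
    using assms by unfold_locales
  show ?thesis
    using mu_Suc_le mu_eq_Min_extJ by blast
qed

end
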